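(* Let $\Gamma$ be a nonempty index set, and for each $\gamma\in\Gamma$ let $A_\gamma,B_\gamma$ be commutative groups. Put $A=\bigoplus_{\gamma}A_\gamma$ and $B=\prod_\gamma B_\gamma$, and regard each $f_\bullet=(f_\gamma)_\gamma\in\prod_\gamma B_\gamma^{A_\gamma}$ as the map $A\to B$, $(x_\gamma)_\gamma\mapsto(f_\gamma(x_\gamma))_\gamma$, so that $\prod_\gamma B_\gamma^{A_\gamma}\subseteq B^A$. Suppose that for every $\gamma\in\Gamma$, $\operatorname{Hom}(\bigoplus_{\lambda\ne\gamma}A_\lambda,B_\gamma)=\{0\}$. Then: (a) $\operatorname{fdeg}(f_\bullet)=\sup_\gamma\operatorname{fdeg}(f_\gamma)$ for all $f_\bullet=(f_\gamma)\in\prod_\gamma B_\gamma^{A_\gamma}$; (b) $\mathcal F_n(A,B)=\prod_\gamma\mathcal F_n(A_\gamma,B_\gamma)$ for every $n\in\mathbb N\cup\{-\infty\}$; (c) $\mathcal F(A,B)=\bigcup_{n<\infty}\prod_\gamma\mathcal F_n(A_\gamma,B_\gamma)\subseteq\prod_\gamma\mathcal F(A_\gamma,B_\gamma)$.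
   Context: For commutative groups $A,B$, $B^A$ denotes the commutative group (under pointwise addition) of all maps $A\to B$. For $a\in A$, the difference operator $\Delta_a:B^A\to B^A$ is $(\Delta_a f)(x)=f(x+a)-f(x)$. Let $\widetilde{\mathbb N}=\mathbb N\cup\{-\infty,\infty\}$ ($\mathbb N=\{0,1,2,\dots\}$), totally ordered with $-\infty$ least and $\infty$ greatest. The functional degree $\operatorname{fdeg}(f)\in\widetilde{\mathbb N}$ of $f\in B^A$ is: $-\infty$ if $f=0$; otherwise the least $n\in\mathbb N$ such that $\Delta_{a_1}\cdots\Delta_{a_{n+1}}f=0$ for all $a_1,\dots,a_{n+1}\in A$; and $\infty$ if no such $n$ exists. For $n\in\widetilde{\mathbb N}$, $\mathcal F_n(A,B)=\{f\in B^A:\operatorname{fdeg}(f)\le n\}$, and $\mathcal F(A,B)=\bigcup_{n<\infty}\mathcal F_n(A,B)$ (the maps of finite functional degree). *)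

theory Defs
  imports "HOL-Algebra.Product_Groups" "HOL-Library.Extended_Real"
begin

text \<open>Groups are HOL-Algebra (multiplicatively written) commutative groups.
  The set B^A of all maps A -> B is rendered as the extensional function space
  carrier G ->E carrier H.  Functional degrees take values in
  {-infinity} \<union> N \<union> {infinity}, viewed inside the complete linear order ereal.\<close>

definition maps :: "('a, 'c) monoid_scheme \<Rightarrow> ('b, 'd) monoid_scheme \<Rightarrow> ('a \<Rightarrow> 'b) set" where
  "maps G H = (carrier G \<rightarrow>\<^sub>E carrier H)"

definition diff_op :: "('a, 'c) monoid_scheme \<Rightarrow> ('b, 'd) monoid_scheme \<Rightarrow> 'a \<Rightarrow> ('a \<Rightarrow> 'b) \<Rightarrow> ('a \<Rightarrow> 'b)" where
  "diff_op G H a f = (\<lambda>x\<in>carrier G. f (x \<otimes>\<^bsub>G\<^esub> a) \<otimes>\<^bsub>H\<^esub> inv\<^bsub>H\<^esub> (f x))"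

definition diffs_vanish :: "('a, 'c) monoid_scheme \<Rightarrow> ('b, 'd) monoid_scheme \<Rightarrow> ('a \<Rightarrow> 'b) \<Rightarrow> nat \<Rightarrow> bool" where
  "diffs_vanish G H f n \<longleftrightarrow>
     (\<forall>as. length as = Suc n \<and> set as \<subseteq> carrier G \<longrightarrow>
        (\<forall>x\<in>carrier G. foldr (diff_op G H) as f x = \<one>\<^bsub>H\<^esub>))"

definition fdeg :: "('a, 'c) monoid_scheme \<Rightarrow> ('b, 'd) monoid_scheme \<Rightarrow> ('a \<Rightarrow> 'b) \<Rightarrow> ereal" where
  "fdeg G H f =
     (if \<forall>x\<in>carrier G. f x = \<one>\<^bsub>H\<^esub> then -\<infinity>
      else if \<exists>n. diffs_vanish G H f n then ereal (real (LEAST n. diffs_vanish G H f n))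
      else \<infinity>)"

definition Fdeg :: "('a, 'c) monoid_scheme \<Rightarrow> ('b, 'd) monoid_scheme \<Rightarrow> ereal \<Rightarrow> ('a \<Rightarrow> 'b) set" where
  "Fdeg G H n = {f \<in> maps G H. fdeg G H f \<le> n}"

definition Ffin :: "('a, 'c) monoid_scheme \<Rightarrow> ('b, 'd) monoid_scheme \<Rightarrow> ('a \<Rightarrow> 'b) set" where
  "Ffin G H = (\<Union>n::nat. Fdeg G H (ereal (real n)))"

definition prod_map :: "'i set \<Rightarrow> ('i \<Rightarrow> ('a, 'c) monoid_scheme) \<Rightarrow> ('i \<Rightarrow> 'a \<Rightarrow> 'b) \<Rightarrow> ('i \<Rightarrow> 'a) \<Rightarrow> ('i \<Rightarrow> 'b)" where
  "prod_map I A f = (\<lambda>x\<in>carrier (sum_group I A). \<lambda>i\<in>I. f i (x i))"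

end

theory Submission
  imports Defs
begin

text \<open>Let \<open>\<phi> : L \<rightarrow> G\<close> be a homomorphism of groups such that every homomorphism \<open>L \<rightarrow> H\<close> is
  trivial. Then every map \<open>f : G \<rightarrow> H\<close> of finite functional degree is invariant under translation
  by \<open>\<phi>(L)\<close>: by induction on the degree all first differences of f are invariant, so the
  quotient \<open>f(x \<phi>(y)) / f(x)\<close> does not depend on x; it is then a homomorphism in y, hence trivial.
  Taking for f the \<open>\<gamma>\<close>-component of a map of finite degree on the direct sum and for \<open>\<phi>\<close> the
  embedding of the sum of the \<open>A\<^sub>\<lambda>\<close> with \<open>\<lambda> \<noteq> \<gamma>\<close>, the component depends only on \<open>x\<^sub>\<gamma>\<close>, i.e. the
  map is a product map. Differences of a product map are computed componentwise, so its degree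
  is the supremum of the degrees of the factors.\<close>

lemma diff_op_apply:
  "x \<in> carrier G \<Longrightarrow> diff_op G H a f x = f (x \<otimes>\<^bsub>G\<^esub> a) \<otimes>\<^bsub>H\<^esub> inv\<^bsub>H\<^esub> f x"
  by (simp add: diff_op_def)

lemma foldr_diff_op_funcset:
  assumes G: "monoid G" and H: "group H"
    and f: "f \<in> carrier G \<rightarrow> carrier H" and as: "set as \<subseteq> carrier G"
  shows "foldr (diff_op G H) as f \<in> carrier G \<rightarrow> carrier H"
  using as
proof (induction as)
  case Nil
  then show ?case using f by simp
next
  case (Cons a as)
  then have a: "a \<in> carrier G" and g: "foldr (diff_op G H) as f \<in> carrier G \<rightarrow> carrier H"
    by auto
  show ?case
  proof
    fix x assume x: "x \<in> carrier G"
    then have "foldr (diff_op G H) as f (x \<otimes>\<^bsub>G\<^esub> a) \<in> carrier H" "foldr (diff_op G H) as f x \<in> carrier H"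
      using g monoid.m_closed[OF G x a] by blast+
    then show "foldr (diff_op G H) (a # as) f x \<in> carrier H"
      using x by (simp add: diff_op_apply group.inv_closed[OF H] monoid.m_closed[OF group.is_monoid[OF H]])
  qed
qed

lemma diffs_vanish_diff_op:
  assumes "diffs_vanish G H f (Suc n)" "a \<in> carrier G"
  shows "diffs_vanish G H (diff_op G H a f) n"
  unfolding diffs_vanish_def
proof (intro allI impI ballI)
  fix as x assume "length as = Suc n \<and> set as \<subseteq> carrier G" "x \<in> carrier G"
  with assms have "foldr (diff_op G H) (as @ [a]) f x = \<one>\<^bsub>H\<^esub>"
    unfolding diffs_vanish_def by (simp del: foldr_append)
  then show "foldr (diff_op G H) as (diff_op G H a f) x = \<one>\<^bsub>H\<^esub>"
    by simp
qed

lemma diffs_vanish_Suc: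
  assumes G: "monoid G" and H: "group H" and f: "diffs_vanish G H f n"
  shows "diffs_vanish G H f (Suc n)"
  unfolding diffs_vanish_def
proof (intro allI impI ballI)
  fix as x assume as: "length as = Suc (Suc n) \<and> set as \<subseteq> carrier G" and x: "x \<in> carrier G"
  then obtain a bs where abs: "as = a # bs" "length bs = Suc n" "set bs \<subseteq> carrier G" "a \<in> carrier G"
    by (cases as) auto
  then have "foldr (diff_op G H) bs f y = \<one>\<^bsub>H\<^esub>" if "y \<in> carrier G" for y
    using f that unfolding diffs_vanish_def by blast
  then show "foldr (diff_op G H) as f x = \<one>\<^bsub>H\<^esub>"
    using x abs monoid.m_closed[OF G]
    by (simp add: diff_op_apply group.is_monoid[OF H] monoid.inv_one monoid.l_one)
qed

lemma diffs_vanish_mono: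
  assumes "monoid G" "group H" "diffs_vanish G H f n" "n \<le> m"
  shows "diffs_vanish G H f m"
  using assms(4,3) by (induction m rule: dec_induct) (auto intro: diffs_vanish_Suc[OF assms(1,2)])

lemma diffs_vanish_0_if_trivial:
  assumes G: "monoid G" and H: "group H" and f: "\<forall>x\<in>carrier G. f x = \<one>\<^bsub>H\<^esub>"
  shows "diffs_vanish G H f 0"
  unfolding diffs_vanish_def
proof (intro allI impI ballI)
  fix as x assume "length as = Suc 0 \<and> set as \<subseteq> carrier G" "x \<in> carrier G"
  then show "foldr (diff_op G H) as f x = \<one>\<^bsub>H\<^esub>"
    using f monoid.m_closed[OF G]
    by (auto simp: length_Suc_conv diff_op_apply group.is_monoid[OF H] monoid.inv_one monoid.l_one)
qed

lemma fdeg_eq_minf_iff: "fdeg G H f = -\<infinity> \<longleftrightarrow> (\<forall>x\<in>carrier G. f x = \<one>\<^bsub>H\<^esub>)"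
  by (simp add: fdeg_def)

lemma fdeg_le_nat_iff:
  assumes "monoid G" "group H"
  shows "fdeg G H f \<le> ereal (real m) \<longleftrightarrow> diffs_vanish G H f m"
proof (cases "\<forall>x\<in>carrier G. f x = \<one>\<^bsub>H\<^esub>")
  case True
  then show ?thesis
    using diffs_vanish_mono[OF assms diffs_vanish_0_if_trivial[OF assms True]] by (simp add: fdeg_def)
next
  case False
  show ?thesis
  proof (cases "\<exists>n. diffs_vanish G H f n")
    case True
    define l where "l = (LEAST n. diffs_vanish G H f n)"
    have "diffs_vanish G H f l"
      unfolding l_def using True by (rule LeastI_ex)
    then have "l \<le> m \<longleftrightarrow> diffs_vanish G H f m"
      using diffs_vanish_mono[OF assms] Least_le[of "diffs_vanish G H f" m] unfolding l_def by blast
    moreover have "fdeg G H f = ereal (real l)"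
      using False True unfolding l_def by (simp add: fdeg_def)
    ultimately show ?thesis
      by simp
  next
    case False
    then show ?thesis using \<open>\<not> (\<forall>x\<in>carrier G. f x = \<one>\<^bsub>H\<^esub>)\<close> by (auto simp: fdeg_def)
  qed
qed

lemma fdeg_less_infty_iff:
  assumes "monoid G" "group H"
  shows "fdeg G H f < \<infinity> \<longleftrightarrow> (\<exists>n. diffs_vanish G H f n)"
  using diffs_vanish_0_if_trivial[OF assms] by (auto simp: fdeg_def)

definition degree_values :: "ereal set" where
  "degree_values = insert (-\<infinity>) (insert \<infinity> (range (\<lambda>k. ereal (real k))))"

lemma fdeg_in_degree_values: "fdeg G H f \<in> degree_values"
  by (auto simp: fdeg_def degree_values_def)

lemma degree_values_round_down:
  fixes x :: ereal
  shows "\<exists>y\<in>degree_values. \<forall>d\<in>degree_values. d \<le> x \<longleftrightarrow> d \<le> y"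
proof (cases x)
  case (real r)
  show ?thesis
  proof (cases "r < 0")
    case True
    then show ?thesis
      by (intro bexI[of _ "-\<infinity>"]) (auto simp: degree_values_def real)
  next
    case False
    define m where "m = nat \<lfloor>r\<rfloor>"
    have "real k \<le> r \<longleftrightarrow> k \<le> m" for k
    proof
      assume "real k \<le> r"
      then show "k \<le> m" unfolding m_def by (rule le_nat_floor)
    next
      assume "k \<le> m"
      then have "real k \<le> real m" by simp
      also have "\<dots> \<le> r" unfolding m_def using False by (simp add: of_nat_floor)
      finally show "real k \<le> r" .
    qed
    then have "d \<le> x \<longleftrightarrow> d \<le> ereal (real m)" if "d \<in> degree_values" for d
      using that by (auto simp: degree_values_def real)
    then show ?thesis
      by (intro bexI[of _ "ereal (real m)"]) (auto simp: degree_values_def)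
  qed
next
  case PInf
  then show ?thesis
    by (intro bexI[of _ \<infinity>]) (simp_all add: degree_values_def)
next
  case MInf
  then show ?thesis
    by (intro bexI[of _ "-\<infinity>"]) (simp_all add: degree_values_def)
qed

lemma eq_SUP_if_same_degree_bounds:
  assumes "d \<in> degree_values" "\<And>i. i \<in> I \<Longrightarrow> e i \<in> degree_values"
    and "\<And>y. y \<in> degree_values \<Longrightarrow> d \<le> y \<longleftrightarrow> (\<forall>i\<in>I. e i \<le> y)"
  shows "d = (SUP i\<in>I. e i)"
proof -
  have le_iff: "d \<le> x \<longleftrightarrow> (\<forall>i\<in>I. e i \<le> x)" for x
  proof -
    obtain y where y: "y \<in> degree_values" and round: "\<forall>d\<in>degree_values. d \<le> x \<longleftrightarrow> d \<le> y"
      using degree_values_round_down[of x] by blast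
    have "d \<le> x \<longleftrightarrow> d \<le> y"
      using round assms(1) by blast
    also have "\<dots> \<longleftrightarrow> (\<forall>i\<in>I. e i \<le> y)"
      using assms(3)[OF y] .
    also have "\<dots> \<longleftrightarrow> (\<forall>i\<in>I. e i \<le> x)"
      using round assms(2) by blast
    finally show ?thesis .
  qed
  show ?thesis
  proof (rule antisym)
    show "d \<le> (SUP i\<in>I. e i)"
      by (simp add: le_iff SUP_upper)
    show "(SUP i\<in>I. e i) \<le> d"
      using le_iff[of d] by (simp add: SUP_le_iff)
  qed
qed

lemma (in group) mult_inv_mult_cancel:
  "\<lbrakk>a \<in> carrier G; b \<in> carrier G; c \<in> carrier G\<rbrakk> \<Longrightarrow> (a \<otimes> inv b) \<otimes> (b \<otimes> inv c) = a \<otimes> inv c"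
proof -
  assume abc: "a \<in> carrier G" "b \<in> carrier G" "c \<in> carrier G"
  then have "inv b \<otimes> (b \<otimes> inv c) = inv c"
    by (simp add: m_assoc[symmetric])
  with abc show ?thesis
    by (simp add: m_assoc)
qed

lemma (in comm_group) div_eq_div_swap:
  assumes "p \<in> carrier G" "q \<in> carrier G" "r \<in> carrier G" "s \<in> carrier G"
    and "p \<otimes> inv q = r \<otimes> inv s"
  shows "p \<otimes> inv r = q \<otimes> inv s"
proof -
  have "p \<otimes> inv r = (p \<otimes> inv q) \<otimes> (q \<otimes> inv r)"
    using assms(1-3) by (simp add: mult_inv_mult_cancel)
  also have "\<dots> = (q \<otimes> inv r) \<otimes> (r \<otimes> inv s)"
    by (subst assms(5)) (simp add: m_comm assms(2-4))
  also have "\<dots> = q \<otimes> inv s"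
    using assms(2-4) by (rule mult_inv_mult_cancel)
  finally show ?thesis .
qed

lemma translation_invariant_if_diffs_invariant:
  assumes G: "comm_group G" and H: "comm_group H" and \<phi>: "\<phi> \<in> hom L G"
    and hom_trivial: "\<And>h. h \<in> hom L H \<Longrightarrow> \<forall>y\<in>carrier L. h y = \<one>\<^bsub>H\<^esub>"
    and f: "f \<in> carrier G \<rightarrow> carrier H"
    and diffs_invariant: "\<And>a x y. \<lbrakk>a \<in> carrier G; x \<in> carrier G; y \<in> carrier L\<rbrakk> \<Longrightarrow>
          diff_op G H a f (x \<otimes>\<^bsub>G\<^esub> \<phi> y) = diff_op G H a f x"
    and x: "x \<in> carrier G" and y: "y \<in> carrier L"
  shows "f (x \<otimes>\<^bsub>G\<^esub> \<phi> y) = f x"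
proof -
  interpret G: comm_group G by (fact G)
  interpret H: comm_group H by (fact H)
  have \<phi>y: "\<phi> y \<in> carrier G" if "y \<in> carrier L" for y
    using \<phi> that by (rule hom_in_carrier)
  have fx: "f x \<in> carrier H" if "x \<in> carrier G" for x
    using f that by blast
  define c where "c y = f (\<phi> y) \<otimes>\<^bsub>H\<^esub> inv\<^bsub>H\<^esub> f \<one>\<^bsub>G\<^esub>" for y
  have quotient_eq: "f (x \<otimes>\<^bsub>G\<^esub> \<phi> y) \<otimes>\<^bsub>H\<^esub> inv\<^bsub>H\<^esub> f x = c y"
    if x: "x \<in> carrier G" and y: "y \<in> carrier L" for x y
  proof -
    \<comment> \<open>the difference with step x is invariant under \<open>\<phi>(y)\<close>; evaluate it at \<open>\<one>\<close>\<close>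
    have "f (\<phi> y \<otimes>\<^bsub>G\<^esub> x) \<otimes>\<^bsub>H\<^esub> inv\<^bsub>H\<^esub> f (\<phi> y) = f x \<otimes>\<^bsub>H\<^esub> inv\<^bsub>H\<^esub> f \<one>\<^bsub>G\<^esub>"
      using diffs_invariant[OF x G.one_closed y] x \<phi>y[OF y] by (simp add: diff_op_apply)
    then have swapped: "f (x \<otimes>\<^bsub>G\<^esub> \<phi> y) \<otimes>\<^bsub>H\<^esub> inv\<^bsub>H\<^esub> f (\<phi> y) = f x \<otimes>\<^bsub>H\<^esub> inv\<^bsub>H\<^esub> f \<one>\<^bsub>G\<^esub>"
      using x \<phi>y[OF y] by (simp only: G.m_comm)
    show ?thesis
      unfolding c_def by (rule H.div_eq_div_swap[OF _ _ _ _ swapped]) (simp_all add: x \<phi>y[OF y] fx)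
  qed
  have "c \<in> hom L H"
  proof (rule homI)
    show "c y \<in> carrier H" if "y \<in> carrier L" for y
      using that f \<phi>y unfolding c_def by auto
    fix y y' assume y: "y \<in> carrier L" and y': "y' \<in> carrier L"
    have "\<phi> (y \<otimes>\<^bsub>L\<^esub> y') = \<phi> y' \<otimes>\<^bsub>G\<^esub> \<phi> y"
      using hom_mult[OF \<phi> y y'] G.m_comm[OF \<phi>y[OF y] \<phi>y[OF y']] by simp
    then have "c (y \<otimes>\<^bsub>L\<^esub> y') = f (\<phi> y' \<otimes>\<^bsub>G\<^esub> \<phi> y) \<otimes>\<^bsub>H\<^esub> inv\<^bsub>H\<^esub> f \<one>\<^bsub>G\<^esub>"
      by (simp only: c_def)
    also have "\<dots> = (f (\<phi> y' \<otimes>\<^bsub>G\<^esub> \<phi> y) \<otimes>\<^bsub>H\<^esub> inv\<^bsub>H\<^esub> f (\<phi> y')) \<otimes>\<^bsub>H\<^esub> c y'"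
      using y y' \<phi>y unfolding c_def by (simp add: fx H.mult_inv_mult_cancel)
    also have "\<dots> = c y \<otimes>\<^bsub>H\<^esub> c y'"
      using y y' \<phi>y by (simp add: quotient_eq)
    finally show "c (y \<otimes>\<^bsub>L\<^esub> y') = c y \<otimes>\<^bsub>H\<^esub> c y'" .
  qed
  then have "c y = \<one>\<^bsub>H\<^esub>"
    using hom_trivial y by blast
  then have "f (x \<otimes>\<^bsub>G\<^esub> \<phi> y) \<otimes>\<^bsub>H\<^esub> inv\<^bsub>H\<^esub> f x = \<one>\<^bsub>H\<^esub>"
    using quotient_eq[OF x y] by simp
  then show ?thesis
    using x \<phi>y[OF y] by (simp add: fx H.inv_solve_right')
qed

lemma diffs_vanish_imp_translation_invariant:
  assumes G: "comm_group G" and H: "comm_group H" and \<phi>: "\<phi> \<in> hom L G"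
    and hom_trivial: "\<And>h. h \<in> hom L H \<Longrightarrow> \<forall>y\<in>carrier L. h y = \<one>\<^bsub>H\<^esub>"
    and "f \<in> carrier G \<rightarrow> carrier H" "diffs_vanish G H f n"
    and "x \<in> carrier G" "y \<in> carrier L"
  shows "f (x \<otimes>\<^bsub>G\<^esub> \<phi> y) = f x"
  using assms(5-)
proof (induction n arbitrary: f x y)
  case 0
  have vanish: "diff_op G H a f z = \<one>\<^bsub>H\<^esub>" if "a \<in> carrier G" "z \<in> carrier G" for a z
    using "0.prems"(2) that unfolding diffs_vanish_def by (auto dest: spec[of _ "[a]"])
  show ?case
  proof (rule translation_invariant_if_diffs_invariant[OF G H \<phi> hom_trivial "0.prems"(1) _ "0.prems"(3,4)])
    fix a x y assume a: "a \<in> carrier G" and x: "x \<in> carrier G" and y: "y \<in> carrier L"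
    then have "x \<otimes>\<^bsub>G\<^esub> \<phi> y \<in> carrier G"
      using hom_in_carrier[OF \<phi>] comm_group.axioms(2)[OF G] by (simp add: group.subgroup_self subgroup.m_closed)
    then show "diff_op G H a f (x \<otimes>\<^bsub>G\<^esub> \<phi> y) = diff_op G H a f x"
      using a x by (simp add: vanish)
  qed
next
  case (Suc n)
  show ?case
  proof (rule translation_invariant_if_diffs_invariant[OF G H \<phi> hom_trivial Suc.prems(1) _ Suc.prems(3,4)])
    fix a x y assume a: "a \<in> carrier G" and x: "x \<in> carrier G" and y: "y \<in> carrier L"
    have "diff_op G H a f \<in> carrier G \<rightarrow> carrier H"
      using foldr_diff_op_funcset[of G H f "[a]"] Suc.prems(1) a G H
      by (simp add: comm_group_def comm_monoid_def)
    then show "diff_op G H a f (x \<otimes>\<^bsub>G\<^esub> \<phi> y) = diff_op G H a f x"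
      using Suc.IH diffs_vanish_diff_op[OF Suc.prems(2) a] x y by blast
  qed
qed

lemma sum_group_component_in_carrier:
  assumes "\<And>i. i \<in> I \<Longrightarrow> group (A i)" "x \<in> carrier (sum_group I A)" "i \<in> I"
  shows "x i \<in> carrier (A i)"
  using assms(2,3) by (auto simp: carrier_sum_group[OF assms(1)])

lemma sum_group_projection_hom:
  assumes "\<And>i. i \<in> I \<Longrightarrow> group (A i)" "i \<in> I"
  shows "(\<lambda>x. x i) \<in> hom (sum_group I A) (A i)"
proof (rule homI)
  show "x i \<in> carrier (A i)" if "x \<in> carrier (sum_group I A)" for x
    using assms(1) that assms(2) by (rule sum_group_component_in_carrier)
qed (simp add: assms(2))

definition sum_single :: "'i set \<Rightarrow> ('i \<Rightarrow> ('a, 'c) monoid_scheme) \<Rightarrow> 'i \<Rightarrow> 'a \<Rightarrow> ('i \<Rightarrow> 'a)" where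
  "sum_single I A i a = (\<lambda>j\<in>I. if j = i then a else \<one>\<^bsub>A j\<^esub>)"

lemma sum_single_apply_self [simp]: "i \<in> I \<Longrightarrow> sum_single I A i a i = a"
  by (simp add: sum_single_def)

lemma sum_single_in_carrier:
  assumes gA: "\<And>i. i \<in> I \<Longrightarrow> group (A i)" and "i \<in> I" "a \<in> carrier (A i)"
  shows "sum_single I A i a \<in> carrier (sum_group I A)"
proof -
  have "{j \<in> I. sum_single I A i a j \<noteq> \<one>\<^bsub>A j\<^esub>} \<subseteq> {i}"
    by (auto simp: sum_single_def)
  then show ?thesis
    using assms by (auto simp: carrier_sum_group sum_single_def finite_subset group.is_monoid)
qed

lemma prod_map_in_maps:
  assumes "\<And>i. i \<in> I \<Longrightarrow> group (A i)" "f \<in> (\<Pi>\<^sub>E i\<in>I. maps (A i) (B i))"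
  shows "prod_map I A f \<in> maps (sum_group I A) (product_group I B)"
proof -
  have "f i (x i) \<in> carrier (B i)" if "x \<in> carrier (sum_group I A)" "i \<in> I" for x i
    using assms(2) sum_group_component_in_carrier[OF assms(1) that] that(2)
    by (auto simp: maps_def)
  then show ?thesis
    by (auto simp: maps_def prod_map_def)
qed

lemma foldr_diff_op_comp_hom:
  assumes G: "monoid G" and \<pi>: "\<pi> \<in> hom G K"
    and "set as \<subseteq> carrier G" "x \<in> carrier G"
  shows "foldr (diff_op G H) as (\<lambda>x\<in>carrier G. h (\<pi> x)) x = foldr (diff_op K H) (map \<pi> as) h (\<pi> x)"
  using assms(3,4)
proof (induction as arbitrary: x)
  case Nil
  then show ?case by simp
next
  case (Cons a as)
  then have "x \<otimes>\<^bsub>G\<^esub> a \<in> carrier G" "\<pi> x \<in> carrier K" "\<pi> (x \<otimes>\<^bsub>G\<^esub> a) = \<pi> x \<otimes>\<^bsub>K\<^esub> \<pi> a"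
    using monoid.m_closed[OF G] hom_in_carrier[OF \<pi>] hom_mult[OF \<pi>] by auto
  with Cons show ?case
    by (simp add: diff_op_apply)
qed

lemma foldr_diff_op_component:
  assumes G: "monoid G" and gB: "\<And>i. i \<in> I \<Longrightarrow> group (B i)"
    and F: "F \<in> carrier G \<rightarrow> carrier (product_group I B)" and i: "i \<in> I"
    and "set as \<subseteq> carrier G" "x \<in> carrier G"
  shows "foldr (diff_op G (B i)) as (\<lambda>x\<in>carrier G. F x i) x = foldr (diff_op G (product_group I B)) as F x i"
  using assms(5,6)
proof (induction as arbitrary: x)
  case Nil
  then show ?case by simp
next
  case (Cons a as)
  let ?P = "product_group I B"
  let ?D = "foldr (diff_op G ?P) as F"
  have xa: "x \<otimes>\<^bsub>G\<^esub> a \<in> carrier G"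
    using Cons.prems monoid.m_closed[OF G] by auto
  have "?D \<in> carrier G \<rightarrow> carrier ?P"
    using Cons.prems by (intro foldr_diff_op_funcset[OF G _ F]) (auto simp: gB)
  then have "?D x \<in> (\<Pi>\<^sub>E i\<in>I. carrier (B i))"
    using Cons.prems by auto
  then have "(?D (x \<otimes>\<^bsub>G\<^esub> a) \<otimes>\<^bsub>?P\<^esub> inv\<^bsub>?P\<^esub> ?D x) i = ?D (x \<otimes>\<^bsub>G\<^esub> a) i \<otimes>\<^bsub>B i\<^esub> inv\<^bsub>B i\<^esub> ?D x i"
    using i gB by simp
  with Cons xa show ?case
    by (simp add: diff_op_apply)
qed

lemma foldr_diff_op_prod_map:
  assumes gA: "\<And>i. i \<in> I \<Longrightarrow> group (A i)" and gB: "\<And>i. i \<in> I \<Longrightarrow> group (B i)"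
    and f: "f \<in> (\<Pi>\<^sub>E i\<in>I. maps (A i) (B i))"
    and as: "set as \<subseteq> carrier (sum_group I A)" and x: "x \<in> carrier (sum_group I A)" and i: "i \<in> I"
  shows "foldr (diff_op (sum_group I A) (product_group I B)) as (prod_map I A f) x i
       = foldr (diff_op (A i) (B i)) (map (\<lambda>a. a i) as) (f i) (x i)"
proof -
  let ?G = "sum_group I A"
  have G: "monoid ?G"
    using gA by (simp add: group.is_monoid)
  have F: "prod_map I A f \<in> carrier ?G \<rightarrow> carrier (product_group I B)"
    using prod_map_in_maps[OF gA f] by (auto simp: maps_def)
  have "foldr (diff_op ?G (product_group I B)) as (prod_map I A f) x i
      = foldr (diff_op ?G (B i)) as (\<lambda>x\<in>carrier ?G. prod_map I A f x i) x"
    by (simp add: foldr_diff_op_component[OF G gB F i as x])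
  also have "(\<lambda>x\<in>carrier ?G. prod_map I A f x i) = (\<lambda>x\<in>carrier ?G. f i (x i))"
    using i by (intro restrict_ext) (simp add: prod_map_def)
  also have "foldr (diff_op ?G (B i)) as (\<lambda>x\<in>carrier ?G. f i (x i)) x
      = foldr (diff_op (A i) (B i)) (map (\<lambda>a. a i) as) (f i) (x i)"
    by (rule foldr_diff_op_comp_hom[OF G sum_group_projection_hom[OF gA i] as x])
  finally show ?thesis .
qed

lemma diffs_vanish_prod_map_iff:
  assumes gA: "\<And>i. i \<in> I \<Longrightarrow> group (A i)" and gB: "\<And>i. i \<in> I \<Longrightarrow> group (B i)"
    and f: "f \<in> (\<Pi>\<^sub>E i\<in>I. maps (A i) (B i))"
  shows "diffs_vanish (sum_group I A) (product_group I B) (prod_map I A f) n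
     \<longleftrightarrow> (\<forall>i\<in>I. diffs_vanish (A i) (B i) (f i) n)"
proof
  assume vanish: "diffs_vanish (sum_group I A) (product_group I B) (prod_map I A f) n"
  show "\<forall>i\<in>I. diffs_vanish (A i) (B i) (f i) n"
    unfolding diffs_vanish_def
  proof (intro ballI allI impI)
    fix i bs y assume i: "i \<in> I" and bs: "length bs = Suc n \<and> set bs \<subseteq> carrier (A i)"
      and y: "y \<in> carrier (A i)"
    let ?as = "map (sum_single I A i) bs"
    have as: "set ?as \<subseteq> carrier (sum_group I A)"
      using bs sum_single_in_carrier[of I A, OF gA i] by auto
    have x: "sum_single I A i y \<in> carrier (sum_group I A)"
      by (rule sum_single_in_carrier[of I A, OF gA i y])
    have "map (\<lambda>a. a i) ?as = bs"
      using i by (simp add: comp_def)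
    then have "foldr (diff_op (A i) (B i)) bs (f i) y
        = foldr (diff_op (sum_group I A) (product_group I B)) ?as (prod_map I A f) (sum_single I A i y) i"
      using foldr_diff_op_prod_map[OF gA gB f as x i] i by simp
    also have "\<dots> = \<one>\<^bsub>product_group I B\<^esub> i"
      using vanish bs as x unfolding diffs_vanish_def by simp
    finally show "foldr (diff_op (A i) (B i)) bs (f i) y = \<one>\<^bsub>B i\<^esub>"
      using i by simp
  qed
next
  assume vanish: "\<forall>i\<in>I. diffs_vanish (A i) (B i) (f i) n"
  show "diffs_vanish (sum_group I A) (product_group I B) (prod_map I A f) n"
    unfolding diffs_vanish_def
  proof (intro ballI allI impI)
    fix as x assume as: "length as = Suc n \<and> set as \<subseteq> carrier (sum_group I A)"
      and x: "x \<in> carrier (sum_group I A)"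
    let ?D = "foldr (diff_op (sum_group I A) (product_group I B)) as (prod_map I A f)"
    have "?D \<in> carrier (sum_group I A) \<rightarrow> carrier (product_group I B)"
      using prod_map_in_maps[OF gA f] as gA gB
      by (intro foldr_diff_op_funcset) (auto simp: maps_def group.is_monoid)
    then have "?D x \<in> (\<Pi>\<^sub>E i\<in>I. carrier (B i))"
      using x by auto
    then have "?D x \<in> extensional I"
      by (simp add: PiE_iff)
    moreover have "?D x i = \<one>\<^bsub>B i\<^esub>" if i: "i \<in> I" for i
    proof -
      have mapped: "set (map (\<lambda>a. a i) as) \<subseteq> carrier (A i)"
        using as sum_group_component_in_carrier[of I A, OF gA _ i] by auto
      have "?D x i = foldr (diff_op (A i) (B i)) (map (\<lambda>a. a i) as) (f i) (x i)"
        using as by (intro foldr_diff_op_prod_map[OF gA gB f _ x i]) auto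
      also have "\<dots> = \<one>\<^bsub>B i\<^esub>"
        using vanish i as mapped sum_group_component_in_carrier[of I A, OF gA x i]
        unfolding diffs_vanish_def by simp
      finally show ?thesis .
    qed
    ultimately show "?D x = \<one>\<^bsub>product_group I B\<^esub>"
      by (auto simp: extensional_def)
  qed
qed

lemma prod_map_trivial_iff:
  assumes gA: "\<And>i. i \<in> I \<Longrightarrow> group (A i)"
  shows "(\<forall>x\<in>carrier (sum_group I A). prod_map I A f x = \<one>\<^bsub>product_group I B\<^esub>)
     \<longleftrightarrow> (\<forall>i\<in>I. \<forall>y\<in>carrier (A i). f i y = \<one>\<^bsub>B i\<^esub>)"
proof
  assume trivial: "\<forall>x\<in>carrier (sum_group I A). prod_map I A f x = \<one>\<^bsub>product_group I B\<^esub>"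
  show "\<forall>i\<in>I. \<forall>y\<in>carrier (A i). f i y = \<one>\<^bsub>B i\<^esub>"
  proof (intro ballI)
    fix i y assume i: "i \<in> I" and y: "y \<in> carrier (A i)"
    have x: "sum_single I A i y \<in> carrier (sum_group I A)"
      by (rule sum_single_in_carrier[of I A, OF gA i y])
    then have "prod_map I A f (sum_single I A i y) i = \<one>\<^bsub>B i\<^esub>"
      using trivial i by simp
    then show "f i y = \<one>\<^bsub>B i\<^esub>"
      using x i by (simp add: prod_map_def)
  qed
next
  assume trivial: "\<forall>i\<in>I. \<forall>y\<in>carrier (A i). f i y = \<one>\<^bsub>B i\<^esub>"
  show "\<forall>x\<in>carrier (sum_group I A). prod_map I A f x = \<one>\<^bsub>product_group I B\<^esub>"
  proof
    fix x assume x: "x \<in> carrier (sum_group I A)"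
    have "f i (x i) = \<one>\<^bsub>B i\<^esub>" if "i \<in> I" for i
      using trivial sum_group_component_in_carrier[of I A, OF gA x that] that by blast
    with x show "prod_map I A f x = \<one>\<^bsub>product_group I B\<^esub>"
      by (auto simp: prod_map_def intro: restrict_ext)
  qed
qed

lemma fdeg_prod_map_le_iff:
  assumes gA: "\<And>i. i \<in> I \<Longrightarrow> group (A i)" and gB: "\<And>i. i \<in> I \<Longrightarrow> group (B i)"
    and f: "f \<in> (\<Pi>\<^sub>E i\<in>I. maps (A i) (B i))" and y: "y \<in> degree_values"
  shows "fdeg (sum_group I A) (product_group I B) (prod_map I A f) \<le> y
     \<longleftrightarrow> (\<forall>i\<in>I. fdeg (A i) (B i) (f i) \<le> y)"
proof -
  have G: "monoid (sum_group I A)" and P: "group (product_group I B)"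
    using gA gB by (simp_all add: group.is_monoid)
  have Ai: "monoid (A i)" if "i \<in> I" for i
    using gA[OF that] by (rule group.is_monoid)
  consider "y = -\<infinity>" | "y = \<infinity>" | k :: nat where "y = ereal (real k)"
    using y by (auto simp: degree_values_def)
  then show ?thesis
  proof cases
    case 1
    then show ?thesis
      using prod_map_trivial_iff[OF gA, where f = f and B = B] by (simp add: fdeg_eq_minf_iff)
  next
    case 2
    then show ?thesis by simp
  next
    case 3
    then show ?thesis
      by (simp add: fdeg_le_nat_iff[OF G P] fdeg_le_nat_iff[OF Ai gB] diffs_vanish_prod_map_iff[OF gA gB f])
  qed
qed

lemma fdeg_prod_map:
  assumes "\<And>i. i \<in> I \<Longrightarrow> group (A i)" "\<And>i. i \<in> I \<Longrightarrow> group (B i)"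
    and "f \<in> (\<Pi>\<^sub>E i\<in>I. maps (A i) (B i))"
  shows "fdeg (sum_group I A) (product_group I B) (prod_map I A f) = (SUP i\<in>I. fdeg (A i) (B i) (f i))"
  by (rule eq_SUP_if_same_degree_bounds[OF fdeg_in_degree_values fdeg_in_degree_values
        fdeg_prod_map_le_iff[OF assms]])

definition sum_embed :: "'i set \<Rightarrow> ('i \<Rightarrow> ('a, 'c) monoid_scheme) \<Rightarrow> 'i set \<Rightarrow> ('i \<Rightarrow> 'a) \<Rightarrow> ('i \<Rightarrow> 'a)" where
  "sum_embed I A J y = (\<lambda>i\<in>I. if i \<in> J then y i else \<one>\<^bsub>A i\<^esub>)"

lemma sum_embed_hom:
  assumes gA: "\<And>i. i \<in> I \<Longrightarrow> group (A i)" and J: "J \<subseteq> I"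
  shows "sum_embed I A J \<in> hom (sum_group J A) (sum_group I A)"
proof (rule homI)
  have gJ: "\<And>i. i \<in> J \<Longrightarrow> group (A i)"
    using gA J by blast
  have one: "\<one>\<^bsub>A i\<^esub> \<in> carrier (A i)" "\<one>\<^bsub>A i\<^esub> \<otimes>\<^bsub>A i\<^esub> \<one>\<^bsub>A i\<^esub> = \<one>\<^bsub>A i\<^esub>" if "i \<in> I" for i
    using gA[OF that] by (simp_all add: group.is_monoid)
  fix y assume "y \<in> carrier (sum_group J A)"
  then have y: "y \<in> (\<Pi>\<^sub>E i\<in>J. carrier (A i))" "finite {i \<in> J. y i \<noteq> \<one>\<^bsub>A i\<^esub>}"
    by (simp_all add: carrier_sum_group[OF gJ])
  have "{i \<in> I. sum_embed I A J y i \<noteq> \<one>\<^bsub>A i\<^esub>} \<subseteq> {i \<in> J. y i \<noteq> \<one>\<^bsub>A i\<^esub>}"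
    by (auto simp: sum_embed_def)
  with y J one show "sum_embed I A J y \<in> carrier (sum_group I A)"
    by (auto simp: carrier_sum_group[OF gA] sum_embed_def finite_subset)
  fix y' assume "y' \<in> carrier (sum_group J A)"
  with J one show "sum_embed I A J (y \<otimes>\<^bsub>sum_group J A\<^esub> y')
      = sum_embed I A J y \<otimes>\<^bsub>sum_group I A\<^esub> sum_embed I A J y'"
    by (auto simp: sum_embed_def intro: restrict_ext)
qed

lemma restrict_in_carrier_sum_group:
  assumes gA: "\<And>i. i \<in> I \<Longrightarrow> group (A i)" and J: "J \<subseteq> I" and x: "x \<in> carrier (sum_group I A)"
  shows "restrict x J \<in> carrier (sum_group J A)"
proof -
  have gJ: "\<And>i. i \<in> J \<Longrightarrow> group (A i)"
    using gA J by blast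
  have "{i \<in> J. restrict x J i \<noteq> \<one>\<^bsub>A i\<^esub>} \<subseteq> {i \<in> I. x i \<noteq> \<one>\<^bsub>A i\<^esub>}"
    using J by auto
  with x J show ?thesis
    by (auto simp: carrier_sum_group[OF gA] carrier_sum_group[OF gJ] finite_subset)
qed

lemma sum_single_mult_embed_restrict:
  assumes gA: "\<And>i. i \<in> I \<Longrightarrow> group (A i)" and i: "i \<in> I" and x: "x \<in> carrier (sum_group I A)"
  shows "sum_single I A i (x i) \<otimes>\<^bsub>sum_group I A\<^esub> sum_embed I A (I - {i}) (restrict x (I - {i})) = x"
proof -
  have "x j \<in> carrier (A j)" if "j \<in> I" for j
    using sum_group_component_in_carrier[of I A, OF gA x that] .
  moreover have "x \<in> extensional I"
    using x by (simp add: carrier_sum_group[OF gA] PiE_iff)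
  ultimately show ?thesis
    using gA by (auto simp: sum_single_def sum_embed_def group.is_monoid extensional_def)
qed

lemma comm_group_sum_group:
  assumes cA: "\<And>i. i \<in> I \<Longrightarrow> comm_group (A i)"
  shows "comm_group (sum_group I A)"
proof -
  have gA: "\<And>i. i \<in> I \<Longrightarrow> group (A i)"
    using cA comm_group.axioms(2) by blast
  show ?thesis
  proof (rule group.group_comm_groupI)
    show "group (sum_group I A)"
      using gA by simp
    fix x y assume "x \<in> carrier (sum_group I A)" "y \<in> carrier (sum_group I A)"
    then show "x \<otimes>\<^bsub>sum_group I A\<^esub> y = y \<otimes>\<^bsub>sum_group I A\<^esub> x"
      using sum_group_component_in_carrier[of I A, OF gA] cA
      by (auto simp: comm_group_def comm_monoid.m_comm intro: restrict_ext)
  qed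
qed

lemma diffs_vanish_component:
  assumes G: "monoid G" and gB: "\<And>i. i \<in> I \<Longrightarrow> group (B i)"
    and F: "F \<in> carrier G \<rightarrow> carrier (product_group I B)" and i: "i \<in> I"
    and vanish: "diffs_vanish G (product_group I B) F n"
  shows "diffs_vanish G (B i) (\<lambda>x\<in>carrier G. F x i) n"
  unfolding diffs_vanish_def
proof (intro allI impI ballI)
  fix as x assume as: "length as = Suc n \<and> set as \<subseteq> carrier G" and x: "x \<in> carrier G"
  then have "foldr (diff_op G (product_group I B)) as F x = \<one>\<^bsub>product_group I B\<^esub>"
    using vanish unfolding diffs_vanish_def by blast
  then show "foldr (diff_op G (B i)) as (\<lambda>x\<in>carrier G. F x i) x = \<one>\<^bsub>B i\<^esub>"
    using foldr_diff_op_component[OF G gB F i _ x] as i by simp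
qed

lemma diffs_vanish_component_factors:
  assumes cA: "\<And>i. i \<in> I \<Longrightarrow> comm_group (A i)" and cB: "\<And>i. i \<in> I \<Longrightarrow> comm_group (B i)"
    and i: "i \<in> I"
    and hom_trivial: "\<And>h. h \<in> hom (sum_group (I - {i}) A) (B i) \<Longrightarrow>
          \<forall>y\<in>carrier (sum_group (I - {i}) A). h y = \<one>\<^bsub>B i\<^esub>"
    and F: "F \<in> maps (sum_group I A) (product_group I B)"
    and vanish: "diffs_vanish (sum_group I A) (product_group I B) F n"
    and x: "x \<in> carrier (sum_group I A)"
  shows "F x i = F (sum_single I A i (x i)) i"
proof -
  let ?G = "sum_group I A"
  let ?Fi = "\<lambda>x\<in>carrier ?G. F x i"
  have gA: "\<And>i. i \<in> I \<Longrightarrow> group (A i)" and gB: "\<And>i. i \<in> I \<Longrightarrow> group (B i)"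
    using cA cB comm_group.axioms(2) by blast+
  have cG: "comm_group ?G"
    by (rule comm_group_sum_group[OF cA])
  have F': "F \<in> carrier ?G \<rightarrow> carrier (product_group I B)"
    using F by (auto simp: maps_def)
  have single: "sum_single I A i (x i) \<in> carrier ?G"
    using sum_single_in_carrier[of I A, OF gA i sum_group_component_in_carrier[of I A, OF gA x i]] .
  have "?Fi (sum_single I A i (x i) \<otimes>\<^bsub>?G\<^esub> sum_embed I A (I - {i}) (restrict x (I - {i})))
      = ?Fi (sum_single I A i (x i))"
  proof (rule diffs_vanish_imp_translation_invariant[OF cG cB[OF i] sum_embed_hom[of I A, OF gA Diff_subset] hom_trivial])
    show "?Fi \<in> carrier ?G \<rightarrow> carrier (B i)"
      using F' i by auto
    show "diffs_vanish ?G (B i) ?Fi n"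
      using diffs_vanish_component[of ?G I B, OF _ gB F' i vanish] gA by (simp add: group.is_monoid)
    show "restrict x (I - {i}) \<in> carrier (sum_group (I - {i}) A)"
      by (rule restrict_in_carrier_sum_group[of I A, OF gA Diff_subset x])
  qed (simp_all add: single)
  then have "?Fi x = ?Fi (sum_single I A i (x i))"
    by (simp only: sum_single_mult_embed_restrict[OF gA i x])
  with single x show ?thesis
    by simp
qed

lemma diffs_vanish_imp_prod_map:
  assumes cA: "\<And>i. i \<in> I \<Longrightarrow> comm_group (A i)" and cB: "\<And>i. i \<in> I \<Longrightarrow> comm_group (B i)"
    and hom_trivial: "\<And>i h. i \<in> I \<Longrightarrow> h \<in> hom (sum_group (I - {i}) A) (B i) \<Longrightarrow>
          \<forall>y\<in>carrier (sum_group (I - {i}) A). h y = \<one>\<^bsub>B i\<^esub>"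
    and F: "F \<in> maps (sum_group I A) (product_group I B)"
    and vanish: "diffs_vanish (sum_group I A) (product_group I B) F n"
  shows "F \<in> prod_map I A ` (\<Pi>\<^sub>E i\<in>I. maps (A i) (B i))"
proof
  have gA: "\<And>i. i \<in> I \<Longrightarrow> group (A i)"
    using cA comm_group.axioms(2) by blast
  define f where "f = (\<lambda>i\<in>I. \<lambda>a\<in>carrier (A i). F (sum_single I A i a) i)"
  have "F (sum_single I A i a) i \<in> carrier (B i)" if "i \<in> I" "a \<in> carrier (A i)" for i a
    using F sum_single_in_carrier[of I A, OF gA that] that(1) by (auto simp: maps_def)
  then show "f \<in> (\<Pi>\<^sub>E i\<in>I. maps (A i) (B i))"
    by (auto simp: f_def maps_def)
  show "F = prod_map I A f"
  proof
    fix x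
    show "F x = prod_map I A f x"
    proof (cases "x \<in> carrier (sum_group I A)")
      case True
      have "F x i = f i (x i)" if i: "i \<in> I" for i
        using diffs_vanish_component_factors[OF cA cB i hom_trivial[OF i] F vanish True]
          sum_group_component_in_carrier[of I A, OF gA True i] i
        by (simp add: f_def)
      moreover have "F x \<in> extensional I"
        using F True by (auto simp: maps_def PiE_iff)
      ultimately show ?thesis
        using True by (auto simp: prod_map_def extensional_def)
    next
      case False
      then show ?thesis
        using F by (auto simp: maps_def prod_map_def)
    qed
  qed
qed

lemma prod_map_image_Fdeg_subset:
  assumes gA: "\<And>i. i \<in> I \<Longrightarrow> group (A i)" and gB: "\<And>i. i \<in> I \<Longrightarrow> group (B i)"
  shows "prod_map I A ` (\<Pi>\<^sub>E i\<in>I. Fdeg (A i) (B i) n) \<subseteq> Fdeg (sum_group I A) (product_group I B) n"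
proof
  fix F assume "F \<in> prod_map I A ` (\<Pi>\<^sub>E i\<in>I. Fdeg (A i) (B i) n)"
  then obtain f where f: "f \<in> (\<Pi>\<^sub>E i\<in>I. Fdeg (A i) (B i) n)" and F_eq: "F = prod_map I A f"
    by blast
  have f_maps: "f \<in> (\<Pi>\<^sub>E i\<in>I. maps (A i) (B i))"
    using f by (auto simp: Fdeg_def PiE_iff)
  have "fdeg (sum_group I A) (product_group I B) F = (SUP i\<in>I. fdeg (A i) (B i) (f i))"
    unfolding F_eq by (rule fdeg_prod_map[OF gA gB f_maps])
  also have "\<dots> \<le> n"
    using f by (auto simp: Fdeg_def PiE_iff intro!: SUP_least)
  finally show "F \<in> Fdeg (sum_group I A) (product_group I B) n"
    using prod_map_in_maps[OF gA f_maps] F_eq by (simp add: Fdeg_def)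
qed

lemma Fdeg_sum_group:
  assumes cA: "\<And>i. i \<in> I \<Longrightarrow> comm_group (A i)" and cB: "\<And>i. i \<in> I \<Longrightarrow> comm_group (B i)"
    and hom_trivial: "\<And>i h. i \<in> I \<Longrightarrow> h \<in> hom (sum_group (I - {i}) A) (B i) \<Longrightarrow>
          \<forall>y\<in>carrier (sum_group (I - {i}) A). h y = \<one>\<^bsub>B i\<^esub>"
    and n: "n < \<infinity>"
  shows "Fdeg (sum_group I A) (product_group I B) n = prod_map I A ` (\<Pi>\<^sub>E i\<in>I. Fdeg (A i) (B i) n)"
proof
  let ?G = "sum_group I A" and ?P = "product_group I B"
  have gA: "\<And>i. i \<in> I \<Longrightarrow> group (A i)" and gB: "\<And>i. i \<in> I \<Longrightarrow> group (B i)"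
    using cA cB comm_group.axioms(2) by blast+
  then have G: "monoid ?G" and P: "group ?P"
    by (simp_all add: group.is_monoid)
  show "prod_map I A ` (\<Pi>\<^sub>E i\<in>I. Fdeg (A i) (B i) n) \<subseteq> Fdeg ?G ?P n"
    by (rule prod_map_image_Fdeg_subset[OF gA gB])
  show "Fdeg ?G ?P n \<subseteq> prod_map I A ` (\<Pi>\<^sub>E i\<in>I. Fdeg (A i) (B i) n)"
  proof
    fix F assume "F \<in> Fdeg ?G ?P n"
    then have F: "F \<in> maps ?G ?P" and le: "fdeg ?G ?P F \<le> n"
      by (simp_all add: Fdeg_def)
    then obtain m where "diffs_vanish ?G ?P F m"
      using n fdeg_less_infty_iff[OF G P] by force
    then obtain f where f: "f \<in> (\<Pi>\<^sub>E i\<in>I. maps (A i) (B i))" and F_eq: "F = prod_map I A f"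
      using diffs_vanish_imp_prod_map[OF cA cB hom_trivial F] by blast
    have "fdeg (A i) (B i) (f i) \<le> n" if "i \<in> I" for i
    proof -
      have "fdeg (A i) (B i) (f i) \<le> (SUP i\<in>I. fdeg (A i) (B i) (f i))"
        using that by (rule SUP_upper)
      also have "\<dots> = fdeg ?G ?P F"
        unfolding F_eq by (rule fdeg_prod_map[OF gA gB f, symmetric])
      finally show ?thesis
        using le by simp
    qed
    with f have "f \<in> (\<Pi>\<^sub>E i\<in>I. Fdeg (A i) (B i) n)"
      by (auto simp: Fdeg_def PiE_iff)
    then show "F \<in> prod_map I A ` (\<Pi>\<^sub>E i\<in>I. Fdeg (A i) (B i) n)"
      unfolding F_eq by (rule imageI)
  qed
qed

theorem theorem3:
  fixes \<Gamma> :: "'i set"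
    and A :: "'i \<Rightarrow> ('a, 'c) monoid_scheme"
    and B :: "'i \<Rightarrow> ('b, 'd) monoid_scheme"
  assumes "\<Gamma> \<noteq> {}"
    and "\<And>\<gamma>. \<gamma> \<in> \<Gamma> \<Longrightarrow> comm_group (A \<gamma>)"
    and "\<And>\<gamma>. \<gamma> \<in> \<Gamma> \<Longrightarrow> comm_group (B \<gamma>)"
    and "\<And>\<gamma> h. \<gamma> \<in> \<Gamma> \<Longrightarrow> h \<in> hom (sum_group (\<Gamma> - {\<gamma>}) A) (B \<gamma>) \<Longrightarrow>
           (\<forall>x\<in>carrier (sum_group (\<Gamma> - {\<gamma>}) A). h x = \<one>\<^bsub>B \<gamma>\<^esub>)"
  shows "(\<forall>f \<in> (\<Pi>\<^sub>E \<gamma>\<in>\<Gamma>. maps (A \<gamma>) (B \<gamma>)).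
            fdeg (sum_group \<Gamma> A) (product_group \<Gamma> B) (prod_map \<Gamma> A f)
              = (SUP \<gamma>\<in>\<Gamma>. fdeg (A \<gamma>) (B \<gamma>) (f \<gamma>)))
       \<and> (\<forall>n. (n = -\<infinity> \<or> (\<exists>k::nat. n = ereal (real k))) \<longrightarrow>
            Fdeg (sum_group \<Gamma> A) (product_group \<Gamma> B) n
              = prod_map \<Gamma> A ` (\<Pi>\<^sub>E \<gamma>\<in>\<Gamma>. Fdeg (A \<gamma>) (B \<gamma>) n))
       \<and> Ffin (sum_group \<Gamma> A) (product_group \<Gamma> B)
              = (\<Union>k::nat. prod_map \<Gamma> A ` (\<Pi>\<^sub>E \<gamma>\<in>\<Gamma>. Fdeg (A \<gamma>) (B \<gamma>) (ereal (real k))))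
       \<and> (\<Union>k::nat. prod_map \<Gamma> A ` (\<Pi>\<^sub>E \<gamma>\<in>\<Gamma>. Fdeg (A \<gamma>) (B \<gamma>) (ereal (real k))))
              \<subseteq> prod_map \<Gamma> A ` (\<Pi>\<^sub>E \<gamma>\<in>\<Gamma>. Ffin (A \<gamma>) (B \<gamma>))"
proof (intro conjI allI impI ballI)
  have gA: "\<And>i. i \<in> \<Gamma> \<Longrightarrow> group (A i)" and gB: "\<And>i. i \<in> \<Gamma> \<Longrightarrow> group (B i)"
    using assms(2,3) comm_group.axioms(2) by blast+
  note Fdeg_eq = Fdeg_sum_group[OF assms(2-4)]
  show "fdeg (sum_group \<Gamma> A) (product_group \<Gamma> B) (prod_map \<Gamma> A f) = (SUP \<gamma>\<in>\<Gamma>. fdeg (A \<gamma>) (B \<gamma>) (f \<gamma>))"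
    if "f \<in> (\<Pi>\<^sub>E \<gamma>\<in>\<Gamma>. maps (A \<gamma>) (B \<gamma>))" for f
    using gA gB that by (rule fdeg_prod_map)
  show "Fdeg (sum_group \<Gamma> A) (product_group \<Gamma> B) n = prod_map \<Gamma> A ` (\<Pi>\<^sub>E \<gamma>\<in>\<Gamma>. Fdeg (A \<gamma>) (B \<gamma>) n)"
    if "n = -\<infinity> \<or> (\<exists>k::nat. n = ereal (real k))" for n
    using that by (intro Fdeg_eq) auto
  show "Ffin (sum_group \<Gamma> A) (product_group \<Gamma> B)
      = (\<Union>k::nat. prod_map \<Gamma> A ` (\<Pi>\<^sub>E \<gamma>\<in>\<Gamma>. Fdeg (A \<gamma>) (B \<gamma>) (ereal (real k))))"
    unfolding Ffin_def by (simp add: Fdeg_eq)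
  have "(\<Pi>\<^sub>E \<gamma>\<in>\<Gamma>. Fdeg (A \<gamma>) (B \<gamma>) (ereal (real k))) \<subseteq> (\<Pi>\<^sub>E \<gamma>\<in>\<Gamma>. Ffin (A \<gamma>) (B \<gamma>))" for k
    by (rule PiE_mono) (auto simp: Ffin_def)
  then show "(\<Union>k::nat. prod_map \<Gamma> A ` (\<Pi>\<^sub>E \<gamma>\<in>\<Gamma>. Fdeg (A \<gamma>) (B \<gamma>) (ereal (real k))))
      \<subseteq> prod_map \<Gamma> A ` (\<Pi>\<^sub>E \<gamma>\<in>\<Gamma>. Ffin (A \<gamma>) (B \<gamma>))"
    by blast
qed

end
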